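(* Let $n=3$ agents all have budget $1$, let all goods have positive costs, and let $\mathbf X=(X_1,X_2,X_3)$ be a budget-feasible allocation. Let $s_1,s_2,s_3\ge 0$ be such that $v_i(g)\le s_i$ for every agent $i$ and every good $g\in X_1\cup X_2\cup X_3$. Then there exists a budget-feasible allocation $\mathbf Y=(Y_1,Y_2,Y_3)$ that is EFx (with respect to budgets), with $Y_1\cup Y_2\cup Y_3\subseteq X_1\cup X_2\cup X_3$, and a labeling $\{i,j,k\}=\{1,2,3\}$ of the agents such that $$v_i(Y_i)\ge \frac{v_i(X_i)}{9}-\frac{s_i}{3},\qquad v_j(Y_j)\ge \frac{v_j(X_j)}{9}-\frac{2s_j}{3},\qquad v_k(Y_k)\ge\frac{v_k(X_k)}{9}-s_k.$$
   Context: Goods have costs $c(g)>0$, $c(S)=\sum_{g\in S}c(g)$; agents have additive nonnegative valuations. An allocation is a tuple of pairwise disjoint sets of goods (not all goods need be allocated); it is budget-feasible if $c(X_i)\le B_i$ for all $i$. An allocation $\mathbf X$ is EFx (with respect to budgets) if for all agents $i\ne j$, every $S\subseteq X_j$ with $c(S)\le B_i$ and every $g\in S$, $v_i(X_i)\ge v_i(S\setminus\{g\})$. *)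

theory Defs
  imports "HOL-Analysis.Analysis"
begin

(* Agents are 0..<n; goods form a finite set M of type 'g.
   c: cost of goods; v i: additive valuation of agent i (given on single goods). *)

definition cost :: "('g \<Rightarrow> real) \<Rightarrow> 'g set \<Rightarrow> real" where
  "cost c S = (\<Sum>g\<in>S. c g)"

definition val :: "('g \<Rightarrow> real) \<Rightarrow> 'g set \<Rightarrow> real" where
  "val u S = (\<Sum>g\<in>S. u g)"

definition is_allocation :: "nat \<Rightarrow> 'g set \<Rightarrow> (nat \<Rightarrow> 'g set) \<Rightarrow> bool" where
  "is_allocation n M X \<longleftrightarrow>
     (\<forall>i<n. X i \<subseteq> M) \<and> (\<forall>i<n. \<forall>j<n. i \<noteq> j \<longrightarrow> X i \<inter> X j = {})"

definition budget_feasible ::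
  "nat \<Rightarrow> ('g \<Rightarrow> real) \<Rightarrow> (nat \<Rightarrow> real) \<Rightarrow> (nat \<Rightarrow> 'g set) \<Rightarrow> bool" where
  "budget_feasible n c B X \<longleftrightarrow> (\<forall>i<n. cost c (X i) \<le> B i)"

definition EFx_budget ::
  "nat \<Rightarrow> ('g \<Rightarrow> real) \<Rightarrow> (nat \<Rightarrow> real) \<Rightarrow> (nat \<Rightarrow> 'g \<Rightarrow> real) \<Rightarrow> (nat \<Rightarrow> 'g set) \<Rightarrow> bool" where
  "EFx_budget n c B v X \<longleftrightarrow>
     (\<forall>i<n. \<forall>j<n. i \<noteq> j \<longrightarrow>
        (\<forall>S. S \<subseteq> X j \<longrightarrow> cost c S \<le> B i \<longrightarrow>
           (\<forall>g\<in>S. val (v i) (X i) \<ge> val (v i) (S - {g}))))"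

end

theory Submission
  imports Defs
begin

text \<open>
  Let \<open>Y\<close> be a budget-feasible EFx allocation of the goods of \<open>X\<close> of maximum utilitarian welfare.
  No agent \<open>i\<close> values the unallocated part of \<open>X\<^sub>i\<close> above \<open>Y\<^sub>i\<close>: otherwise a cardinality-minimal
  subset of it that some agent prefers to her bundle could be handed to that agent, keeping EFx
  and raising the welfare. EFx bounds each further piece \<open>v\<^sub>i(X\<^sub>i \<inter> Y\<^sub>j)\<close>, \<open>j \<noteq> i\<close>, by
  \<open>v\<^sub>i(Y\<^sub>i) + s\<^sub>i\<close>, so \<open>v\<^sub>i(X\<^sub>i) \<le> (n + 1) v\<^sub>i(Y\<^sub>i) + (n - 1) s\<^sub>i\<close>. For three agents this gives
  \<open>v\<^sub>i(Y\<^sub>i) \<ge> (v\<^sub>i(X\<^sub>i) - 2 s\<^sub>i) / 4\<close>, which beats all three required bounds.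
\<close>

lemma val_mono:
  "finite B \<Longrightarrow> A \<subseteq> B \<Longrightarrow> (\<And>x. x \<in> B \<Longrightarrow> u x \<ge> 0) \<Longrightarrow> val u A \<le> val u B"
  unfolding val_def by (rule sum_mono2) auto

lemma val_nonneg: "(\<And>x. x \<in> A \<Longrightarrow> u x \<ge> 0) \<Longrightarrow> val u A \<ge> 0"
  unfolding val_def by (rule sum_nonneg) auto

lemma val_remove: "finite A \<Longrightarrow> g \<in> A \<Longrightarrow> val u A = val u (A - {g}) + u g"
  unfolding val_def by (simp add: sum.remove)

lemma cost_mono:
  "finite B \<Longrightarrow> A \<subseteq> B \<Longrightarrow> (\<And>x. x \<in> B \<Longrightarrow> c x > 0) \<Longrightarrow> cost c A \<le> cost c B"
  unfolding cost_def by (rule sum_mono2) (auto simp: less_imp_le)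

lemma val_split_by_allocation:
  assumes "finite M" "A \<subseteq> M" "is_allocation n M Y"
  shows "val u A = (\<Sum>j<n. val u (A \<inter> Y j)) + val u (A - (\<Union>j<n. Y j))"
proof -
  have "finite A"
    using finite_subset[OF assms(2,1)] .
  have disj: "(A \<inter> Y i) \<inter> (A \<inter> Y j) = {}" if "i < n" "j < n" "i \<noteq> j" for i j
    using assms(3) that unfolding is_allocation_def by blast
  have "val u A = val u (A \<inter> (\<Union>j<n. Y j)) + val u (A - (\<Union>j<n. Y j))"
    unfolding val_def by (rule sum.Int_Diff[OF \<open>finite A\<close>])
  also have "A \<inter> (\<Union>j<n. Y j) = (\<Union>j<n. A \<inter> Y j)"
    by blast
  also have "val u (\<Union>j<n. A \<inter> Y j) = (\<Sum>j<n. val u (A \<inter> Y j))"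
    unfolding val_def using \<open>finite A\<close> disj by (intro sum.UNION_disjoint) auto
  finally show ?thesis .
qed

definition EFx_allocation ::
  "nat \<Rightarrow> 'g set \<Rightarrow> ('g \<Rightarrow> real) \<Rightarrow> (nat \<Rightarrow> real) \<Rightarrow> (nat \<Rightarrow> 'g \<Rightarrow> real) \<Rightarrow> (nat \<Rightarrow> 'g set) \<Rightarrow> bool"
  where "EFx_allocation n M c B v Y \<longleftrightarrow>
    is_allocation n M Y \<and> budget_feasible n c B Y \<and> EFx_budget n c B v Y"

definition welfare :: "nat \<Rightarrow> (nat \<Rightarrow> 'g \<Rightarrow> real) \<Rightarrow> (nat \<Rightarrow> 'g set) \<Rightarrow> real" where
  "welfare n v Y = (\<Sum>i<n. val (v i) (Y i))"

lemma welfare_fun_upd: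
  "h < n \<Longrightarrow> welfare n v (Y(h := Z)) = welfare n v Y - val (v h) (Y h) + val (v h) Z"
  unfolding welfare_def by (auto simp: sum.remove[of "{..<n}" h] intro!: sum.cong)

lemma EFx_allocation_empty:
  "(\<And>i. i < n \<Longrightarrow> B i \<ge> 0) \<Longrightarrow> EFx_allocation n M c B v (\<lambda>_. {})"
  by (auto simp: EFx_allocation_def is_allocation_def budget_feasible_def EFx_budget_def
      cost_def val_def)

text \<open>
  \<open>Z\<close> is a cardinality-minimal subset of \<open>P\<close> that some agent prefers to her bundle. Minimality
  preserves EFx: an agent preferring \<open>S - {g}\<close>, \<open>S \<subseteq> Z\<close>, to her bundle would make \<open>S - {g}\<close> a
  smaller such set.
\<close>
lemma EFx_allocation_improve:
  assumes M: "finite M" "\<And>g. g \<in> M \<Longrightarrow> c g > 0"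
    and Y: "EFx_allocation n M c (\<lambda>_. b) v Y"
    and P: "P \<subseteq> M" "\<And>l. l < n \<Longrightarrow> P \<inter> Y l = {}" "cost c P \<le> b"
    and better: "i < n" "val (v i) P > val (v i) (Y i)"
  shows "\<exists>h<n. \<exists>Z\<subseteq>P. val (v h) Z > val (v h) (Y h) \<and> EFx_allocation n M c (\<lambda>_. b) v (Y(h := Z))"
proof -
  define preferred where "preferred Z \<longleftrightarrow> Z \<subseteq> P \<and> (\<exists>h<n. val (v h) Z > val (v h) (Y h))" for Z
  have "preferred P"
    unfolding preferred_def using better by blast
  then obtain Z where "preferred Z" and Zmin: "\<And>Z'. preferred Z' \<Longrightarrow> card Z \<le> card Z'"
    using ex_has_least_nat[of preferred P card] by blast
  then obtain h where h: "h < n" "val (v h) Z > val (v h) (Y h)" and ZP: "Z \<subseteq> P"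
    unfolding preferred_def by blast
  have finP: "finite P"
    using finite_subset[OF P(1) M(1)] .
  then have finZ: "finite Z"
    using finite_subset[OF ZP] by blast
  have YM: "Y l \<subseteq> M" and Ydisj: "l' < n \<Longrightarrow> l \<noteq> l' \<Longrightarrow> Y l \<inter> Y l' = {}" if "l < n" for l l'
    using Y that unfolding EFx_allocation_def is_allocation_def by blast+
  have ZY: "Z \<inter> Y l = {}" if "l < n" for l
    using P(2)[OF that] ZP by blast
  have alloc: "is_allocation n M (Y(h := Z))"
    unfolding is_allocation_def using YM Ydisj ZP P(1) ZY by (auto simp: Int_commute)
  have "cost c Z \<le> cost c P"
    using finP ZP P(1) M(2) by (intro cost_mono) auto
  with P(3) have "cost c Z \<le> b"
    by linarith
  then have feasible: "budget_feasible n c (\<lambda>_. b) (Y(h := Z))"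
    using Y unfolding EFx_allocation_def budget_feasible_def by simp
  have "val (v a) (S - {g}) \<le> val (v a) ((Y(h := Z)) a)"
    if "a < n" "a' < n" "a \<noteq> a'" "S \<subseteq> (Y(h := Z)) a'" "cost c S \<le> b" "g \<in> S" for a a' S g
  proof (cases "a' = h")
    case True
    with that have SZ: "S \<subseteq> Z" and "a \<noteq> h"
      by auto
    have "card (S - {g}) < card Z"
      using SZ \<open>g \<in> S\<close> by (intro psubset_card_mono[OF finZ]) blast
    then have "\<not> preferred (S - {g})"
      using Zmin by (meson not_le)
    then show ?thesis
      using SZ ZP \<open>a < n\<close> \<open>a \<noteq> h\<close> unfolding preferred_def by auto
  next
    case False
    with that have "val (v a) (S - {g}) \<le> val (v a) (Y a)"
      using Y unfolding EFx_allocation_def EFx_budget_def by simp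
    with h show ?thesis
      by (cases "a = h") auto
  qed
  then have "EFx_budget n c (\<lambda>_. b) v (Y(h := Z))"
    unfolding EFx_budget_def by blast
  with alloc feasible h ZP show ?thesis
    unfolding EFx_allocation_def by blast
qed

definition EFx_allocations_within ::
  "nat \<Rightarrow> 'g set \<Rightarrow> ('g \<Rightarrow> real) \<Rightarrow> (nat \<Rightarrow> real) \<Rightarrow> (nat \<Rightarrow> 'g \<Rightarrow> real) \<Rightarrow> 'g set \<Rightarrow> (nat \<Rightarrow> 'g set) set"
  where "EFx_allocations_within n M c B v U =
    {Y. EFx_allocation n M c B v Y \<and> (\<forall>i<n. Y i \<subseteq> U) \<and> (\<forall>i\<ge>n. Y i = {})}"

lemma finite_EFx_allocations_within:
  assumes "finite U"
  shows "finite (EFx_allocations_within n M c B v U)"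
proof (rule finite_subset)
  show "EFx_allocations_within n M c B v U \<subseteq>
      {Y. \<forall>i. (i \<in> {..<n} \<longrightarrow> Y i \<in> Pow U) \<and> (i \<notin> {..<n} \<longrightarrow> Y i = {})}"
    by (auto simp: EFx_allocations_within_def)
qed (intro finite_set_of_finite_funs finite_lessThan finite_Pow_iff[THEN iffD2] assms)

lemma welfare_maximal_EFx_allocation_exists:
  assumes "finite U" "\<And>i. i < n \<Longrightarrow> B i \<ge> 0"
  obtains Y where "Y \<in> EFx_allocations_within n M c B v U"
    "\<And>Y'. Y' \<in> EFx_allocations_within n M c B v U \<Longrightarrow> welfare n v Y' \<le> welfare n v Y"
proof -
  let ?F = "EFx_allocations_within n M c B v U"
  have fin: "finite (welfare n v ` ?F)"
    using finite_EFx_allocations_within[OF assms(1)] by blast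
  have "(\<lambda>_. {}) \<in> ?F"
    using EFx_allocation_empty[OF assms(2)] by (auto simp: EFx_allocations_within_def)
  then have "Max (welfare n v ` ?F) \<in> welfare n v ` ?F"
    using fin by (intro Max_in) auto
  then obtain Y where Y: "Y \<in> ?F" "welfare n v Y = Max (welfare n v ` ?F)"
    by (metis imageE)
  have "welfare n v Y' \<le> welfare n v Y" if "Y' \<in> ?F" for Y'
    using Max_ge[OF fin imageI[OF that]] Y(2) by simp
  with Y(1) show thesis
    by (rule that)
qed

lemma welfare_maximal_unallocated_le:
  assumes M: "finite M" "\<And>g. g \<in> M \<Longrightarrow> c g > 0"
    and Y: "Y \<in> EFx_allocations_within n M c (\<lambda>_. b) v U"
    and Ymax: "\<And>Y'. Y' \<in> EFx_allocations_within n M c (\<lambda>_. b) v U \<Longrightarrow> welfare n v Y' \<le> welfare n v Y"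
    and A: "A \<subseteq> M" "A \<subseteq> U" "cost c A \<le> b"
    and "i < n"
  shows "val (v i) (A - (\<Union>j<n. Y j)) \<le> val (v i) (Y i)"
proof (rule ccontr)
  define P where "P = A - (\<Union>j<n. Y j)"
  assume "\<not> ?thesis"
  then have better: "val (v i) P > val (v i) (Y i)"
    unfolding P_def by simp
  have "finite A"
    using finite_subset[OF A(1) M(1)] .
  then have "cost c P \<le> cost c A"
    unfolding P_def using A(1) M(2) by (intro cost_mono) auto
  with A(3) have "cost c P \<le> b"
    by linarith
  moreover have Y_alloc: "EFx_allocation n M c (\<lambda>_. b) v Y"
    using Y by (simp add: EFx_allocations_within_def)
  moreover have "P \<subseteq> M" "\<And>l. l < n \<Longrightarrow> P \<inter> Y l = {}"
    unfolding P_def using A(1) by auto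
  ultimately obtain h Z where h: "h < n" "val (v h) Z > val (v h) (Y h)" and "Z \<subseteq> P"
    and "EFx_allocation n M c (\<lambda>_. b) v (Y(h := Z))"
    using EFx_allocation_improve[OF M Y_alloc _ _ _ \<open>i < n\<close> better] by blast
  with A(2) Y have "Y(h := Z) \<in> EFx_allocations_within n M c (\<lambda>_. b) v U"
    unfolding EFx_allocations_within_def P_def by auto
  from Ymax[OF this] show False
    using welfare_fun_upd[OF h(1), of v Y Z] h(2) by linarith
qed

lemma EFx_val_Int_le:
  assumes M: "finite M" "\<And>g. g \<in> M \<Longrightarrow> v i g \<ge> 0"
    and Y: "EFx_allocation n M c (\<lambda>_. b) v Y"
    and ij: "i < n" "j < n" "i \<noteq> j"
    and s: "0 \<le> s" "\<And>g. g \<in> A \<inter> Y j \<Longrightarrow> v i g \<le> s"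
  shows "val (v i) (A \<inter> Y j) \<le> val (v i) (Y i) + s"
proof (cases "A \<inter> Y j = {}")
  case True
  have "Y i \<subseteq> M"
    using Y ij unfolding EFx_allocation_def is_allocation_def by blast
  then have "0 \<le> val (v i) (Y i)"
    using M(2) by (intro val_nonneg) blast
  with True s(1) show ?thesis
    by (simp add: val_def)
next
  case False
  then obtain g where g: "g \<in> A \<inter> Y j" by blast
  have YjM: "Y j \<subseteq> M" and "cost c (Y j) \<le> b"
    using Y ij unfolding EFx_allocation_def is_allocation_def budget_feasible_def by auto
  then have "val (v i) (Y j - {g}) \<le> val (v i) (Y i)"
    using Y ij g unfolding EFx_allocation_def EFx_budget_def by blast
  moreover have fin: "finite (Y j)"
    using finite_subset[OF YjM M(1)] .
  then have "val (v i) (A \<inter> Y j - {g}) \<le> val (v i) (Y j - {g})"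
    using YjM M(2) by (intro val_mono) auto
  moreover have "val (v i) (A \<inter> Y j) = val (v i) (A \<inter> Y j - {g}) + v i g"
    using fin g by (intro val_remove) auto
  ultimately show ?thesis
    using s(2)[OF g] by linarith
qed

lemma EFx_allocation_val_le:
  assumes M: "finite M" "\<And>g. g \<in> M \<Longrightarrow> v i g \<ge> 0"
    and Y: "EFx_allocation n M c (\<lambda>_. b) v Y"
    and A: "A \<subseteq> M" "val (v i) (A - (\<Union>j<n. Y j)) \<le> val (v i) (Y i)"
    and s: "0 \<le> s" "\<And>g. g \<in> A \<Longrightarrow> v i g \<le> s"
    and "i < n"
  shows "val (v i) A \<le> (real n + 1) * val (v i) (Y i) + (real n - 1) * s"
proof -
  have YM: "Y j \<subseteq> M" if "j < n" for j
    using Y that unfolding EFx_allocation_def is_allocation_def by blast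
  have "val (v i) (A \<inter> Y j) \<le> val (v i) (Y i) + (if j = i then 0 else s)" if "j < n" for j
  proof (cases "j = i")
    case True
    then show ?thesis
      using val_mono[of "Y i" "A \<inter> Y i"] YM[OF \<open>i < n\<close>] M finite_subset[of "Y i" M] by auto
  next
    case False
    then show ?thesis
      using EFx_val_Int_le[OF M Y \<open>i < n\<close> that _ s(1)] s(2) by auto
  qed
  then have "(\<Sum>j<n. val (v i) (A \<inter> Y j)) \<le> (\<Sum>j<n. val (v i) (Y i) + (if j = i then 0 else s))"
    by (rule sum_mono) simp
  also have "\<dots> = n * val (v i) (Y i) + (real n - 1) * s"
    using \<open>i < n\<close> by (simp add: sum.distrib sum.If_cases Diff_eq[symmetric] of_nat_diff)
  moreover have "val (v i) A = (\<Sum>j<n. val (v i) (A \<inter> Y j)) + val (v i) (A - (\<Union>j<n. Y j))"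
    using Y unfolding EFx_allocation_def by (intro val_split_by_allocation[OF M(1) A(1)]) blast
  ultimately show ?thesis
    using A(2) by (simp add: algebra_simps)
qed

theorem exists_EFx_allocation_val_ge:
  assumes M: "finite M" "\<And>g. g \<in> M \<Longrightarrow> c g > 0"
    and v: "\<And>i g. i < n \<Longrightarrow> g \<in> M \<Longrightarrow> v i g \<ge> 0"
    and X: "is_allocation n M X" "budget_feasible n c (\<lambda>_. b) X"
    and s: "\<And>i. i < n \<Longrightarrow> 0 \<le> s i" "\<And>i g. i < n \<Longrightarrow> g \<in> X i \<Longrightarrow> v i g \<le> s i"
  shows "\<exists>Y. EFx_allocation n M c (\<lambda>_. b) v Y \<and> (\<forall>i<n. Y i \<subseteq> (\<Union>j<n. X j)) \<and>
    (\<forall>i<n. val (v i) (X i) \<le> (real n + 1) * val (v i) (Y i) + (real n - 1) * s i)"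
proof -
  define U where "U = (\<Union>j<n. X j)"
  have XM: "X i \<subseteq> M" if "i < n" for i
    using X(1) that unfolding is_allocation_def by blast
  have "finite U"
    unfolding U_def using XM M(1) finite_subset by blast
  moreover have b: "b \<ge> 0" if "i < n" for i
  proof -
    have "0 \<le> cost c (X i)"
      unfolding cost_def using XM[OF that] M(2) by (intro sum_nonneg) (auto intro: less_imp_le)
    with X(2) that show ?thesis
      unfolding budget_feasible_def by fastforce
  qed
  ultimately obtain Y where Y: "Y \<in> EFx_allocations_within n M c (\<lambda>_. b) v U"
    and Ymax: "\<And>Y'. Y' \<in> EFx_allocations_within n M c (\<lambda>_. b) v U \<Longrightarrow> welfare n v Y' \<le> welfare n v Y"
    using welfare_maximal_EFx_allocation_exists[of U n "\<lambda>_. b" M c v] b by blast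
  have Y_alloc: "EFx_allocation n M c (\<lambda>_. b) v Y" and "\<forall>i<n. Y i \<subseteq> U"
    using Y by (auto simp: EFx_allocations_within_def)
  moreover have "val (v i) (X i) \<le> (real n + 1) * val (v i) (Y i) + (real n - 1) * s i" if "i < n" for i
  proof (rule EFx_allocation_val_le[OF M(1) v[OF that] Y_alloc XM[OF that] _ s(1)[OF that] s(2)[OF that] that])
    show "val (v i) (X i - (\<Union>j<n. Y j)) \<le> val (v i) (Y i)"
      using X(2) that unfolding budget_feasible_def
      by (intro welfare_maximal_unallocated_le[OF M Y Ymax XM[OF that]]) (auto simp: U_def)
  qed
  ultimately show ?thesis
    unfolding U_def by blast
qed

theorem mainTheorem7:
  fixes M :: "'g set" and c :: "'g \<Rightarrow> real" and v :: "nat \<Rightarrow> 'g \<Rightarrow> real"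
    and X :: "nat \<Rightarrow> 'g set" and s :: "nat \<Rightarrow> real"
  assumes finM: "finite M"
    and cpos: "\<And>g. g \<in> M \<Longrightarrow> c g > 0"
    and vnn: "\<And>i g. i < 3 \<Longrightarrow> g \<in> M \<Longrightarrow> v i g \<ge> 0"
    and Xalloc: "is_allocation 3 M X"
    and Xfeas: "budget_feasible 3 c (\<lambda>_. 1) X"
    and snn: "\<And>i. i < 3 \<Longrightarrow> s i \<ge> 0"
    and sbound: "\<And>i g. i < 3 \<Longrightarrow> g \<in> X 0 \<union> X 1 \<union> X 2 \<Longrightarrow> v i g \<le> s i"
  shows "\<exists>Y i j k.
           is_allocation 3 M Y \<and> budget_feasible 3 c (\<lambda>_. 1) Y \<and>
           EFx_budget 3 c (\<lambda>_. 1) v Y \<and>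
           Y 0 \<union> Y 1 \<union> Y 2 \<subseteq> X 0 \<union> X 1 \<union> X 2 \<and>
           {i, j, k} = {0, 1, 2::nat} \<and>
           val (v i) (Y i) \<ge> val (v i) (X i) / 9 - s i / 3 \<and>
           val (v j) (Y j) \<ge> val (v j) (X j) / 9 - 2 * s j / 3 \<and>
           val (v k) (Y k) \<ge> val (v k) (X k) / 9 - s k"
proof -
  have three: "{..<3::nat} = {0, 1, 2}"
    by auto
  have "\<And>i g. i < 3 \<Longrightarrow> g \<in> X i \<Longrightarrow> v i g \<le> s i"
    using sbound by (fastforce simp: less_Suc_eq numeral_3_eq_3 eval_nat_numeral)
  then obtain Y where Y: "EFx_allocation 3 M c (\<lambda>_. 1) v Y" "\<forall>i<3. Y i \<subseteq> (\<Union>j<3. X j)"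
    and bound: "\<forall>i<3. val (v i) (X i) \<le> 4 * val (v i) (Y i) + 2 * s i"
    using exists_EFx_allocation_val_ge[of M c 3 v X 1 s, OF finM cpos vnn Xalloc Xfeas snn]
    by auto
  have ninth: "val (v i) (X i) / 9 - s i / 3 \<le> val (v i) (Y i)" if "i < 3" for i
  proof -
    have "0 \<le> val (v i) (Y i)"
      using Y(1) vnn[OF that] that unfolding EFx_allocation_def is_allocation_def
      by (intro val_nonneg) blast
    moreover have "val (v i) (X i) \<le> 4 * val (v i) (Y i) + 2 * s i"
      using bound that by blast
    ultimately show ?thesis
      using snn[OF that] by linarith
  qed
  show ?thesis
  proof (intro exI conjI)
    show "is_allocation 3 M Y" "budget_feasible 3 c (\<lambda>_. 1) Y" "EFx_budget 3 c (\<lambda>_. 1) v Y"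
      using Y(1) unfolding EFx_allocation_def by blast+
    show "Y 0 \<union> Y 1 \<union> Y 2 \<subseteq> X 0 \<union> X 1 \<union> X 2"
      using Y(2)[rule_format, of 0] Y(2)[rule_format, of 1] Y(2)[rule_format, of 2]
      by (auto simp: three)
    show "{0, 1, 2} = {0, 1, 2::nat}" ..
    show "val (v 0) (X 0) / 9 - s 0 / 3 \<le> val (v 0) (Y 0)"
      using ninth[of 0] by simp
    show "val (v 1) (X 1) / 9 - 2 * s 1 / 3 \<le> val (v 1) (Y 1)"
      using ninth[of 1] snn[of 1] by simp
    show "val (v 2) (X 2) / 9 - s 2 \<le> val (v 2) (Y 2)"
      using ninth[of 2] snn[of 2] by simp
  qed
qed

end
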